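(* Assume the Green's functions $G_D[2T]$, $G_D[T]$, $G_{M_2}[T]$ exist. Let $\sigma_1,\sigma_2\in L^1(I)$, let $u_{M_2}$ be the unique solution of $Lu=\sigma_1$ a.e. on $I$, $u\in X_{M_2,T}$, and $u_D$ the unique solution of $Lu=\sigma_2$ a.e. on $I$, $u\in X_{D,T}$. Then: 1. If $G_D[2T]\ge0$ on $J\times J$ and $|\sigma_2(t)|\le\sigma_1(t)$ for a.e. $t\in I$, then $|u_D(t)|\le u_{M_2}(t)$ for all $t\in I$. 2. If $G_D[2T]\le0$ on $J\times J$ and $0\le\sigma_2(t)\le\sigma_1(t)$ for a.e. $t\in I$, then $u_{M_2}(t)\le0$ and $u_{M_2}(t)\le u_D(t)$ for all $t\in I$. 3. If $G_D[2T]\le0$ on $J\times J$ and $\sigma_1(t)\le\sigma_2(t)\le0$ for a.e. $t\in I$, then $u_{M_2}(t)\ge0$ and $u_D(t)\le u_{M_2}(t)$ for all $t\in I$.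
   Context: Fix $n\ge 1$, $T>0$, $I=[0,T]$, $J=[0,2T]$. $W^{2n,1}(K)$: $u\in C^{2n-1}(K)$ with $u^{(2n-1)}$ absolutely continuous. Let $a_0,\dots,a_{2n-1}\in L^\alpha(I)$, $\alpha\ge1$, $Lu=u^{(2n)}+\sum_{k=0}^{2n-1}a_ku^{(k)}$ on $I$. $\widetilde L u=u^{(2n)}+\sum_{k=0}^{n-1}(\hat a_{2k+1}u^{(2k+1)}+\tilde a_{2k}u^{(2k)})$ on $J$, where $\tilde a_{2k}=a_{2k}$, $\hat a_{2k+1}=a_{2k+1}$ on $I$, and $\tilde a_{2k}(t)=a_{2k}(2T-t)$, $\hat a_{2k+1}(t)=-a_{2k+1}(2T-t)$ for $t\in(T,2T]$. An operator $M$ is nonresonant in $X$ if $Mu=0$ a.e., $u\in X$ forces $u\equiv0$; its Green's function $G$ then gives the unique solution $u(t)=\int G(t,s)\sigma(s)ds$ of $Mu=\sigma$, $u\in X$. $X_{D,T}=\{u\in W^{2n,1}(I): u^{(2k)}(0)=u^{(2k)}(T)=0,\ k=0,\dots,n-1\}$ and $X_{M_2,T}=\{u\in W^{2n,1}(I): u^{(2k)}(0)=u^{(2k+1)}(T)=0,\ k=0,\dots,n-1\}$; $G_D[T]$, $G_{M_2}[T]$ are the Green's functions of $L$ on these spaces. $G_D[2T]$: Green's function of $\widetilde L$ on $\{u\in W^{2n,1}(J): u^{(2k)}(0)=u^{(2k)}(2T)=0,\ k=0,\dots,n-1\}$. *)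

theory Defs
  imports "HOL-Analysis.Analysis"
begin

definition abs_cont_on :: "real set \<Rightarrow> (real \<Rightarrow> real) \<Rightarrow> bool" where
  "abs_cont_on K f \<longleftrightarrow>
     (\<forall>\<epsilon>>0. \<exists>\<delta>>0. \<forall>(N::nat) (a::nat \<Rightarrow> real) (b::nat \<Rightarrow> real).
        (\<forall>i<N. a i \<le> b i \<and> {a i..b i} \<subseteq> K) \<and>
        (\<forall>i<N. \<forall>j<N. i \<noteq> j \<longrightarrow> b i \<le> a j \<or> b j \<le> a i) \<and>
        (\<Sum>i<N. b i - a i) < \<delta>
        \<longrightarrow> (\<Sum>i<N. \<bar>f (b i) - f (a i)\<bar>) < \<epsilon>)"

definition in_Lp :: "real \<Rightarrow> real set \<Rightarrow> (real \<Rightarrow> real) \<Rightarrow> bool" where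
  "in_Lp p K f \<longleftrightarrow> f measurable_on K \<and> (\<lambda>t. \<bar>f t\<bar> powr p) integrable_on K"

text \<open>W^{m,1}(K) with m = 2n: Du k is the k-th derivative of u (derivatives taken
  within K) for k \<le> m-1, Du (m-1) is absolutely continuous on K, and Du m is its
  derivative, which exists almost everywhere in K.\<close>
definition W_m1 :: "nat \<Rightarrow> real set \<Rightarrow> (real \<Rightarrow> real) \<Rightarrow> (nat \<Rightarrow> real \<Rightarrow> real) \<Rightarrow> bool" where
  "W_m1 m K u Du \<longleftrightarrow>
     (\<forall>t\<in>K. Du 0 t = u t) \<and>
     (\<forall>k<m - 1. \<forall>t\<in>K. (Du k has_real_derivative Du (Suc k) t) (at t within K)) \<and>
     abs_cont_on K (Du (m - 1)) \<and>
     (AE t in lebesgue. t \<in> K \<longrightarrow> (Du (m - 1) has_real_derivative Du m t) (at t))"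

definition solves :: "nat \<Rightarrow> real set \<Rightarrow> (nat \<Rightarrow> real \<Rightarrow> real) \<Rightarrow>
    ((nat \<Rightarrow> real \<Rightarrow> real) \<Rightarrow> bool) \<Rightarrow> (real \<Rightarrow> real) \<Rightarrow> (real \<Rightarrow> real) \<Rightarrow> bool" where
  "solves m K c bc \<sigma> u \<longleftrightarrow>
     (\<exists>Du. W_m1 m K u Du \<and> bc Du \<and>
        (AE t in lebesgue. t \<in> K \<longrightarrow> Du m t + (\<Sum>k<m. c k t * Du k t) = \<sigma> t))"

definition nonresonant :: "nat \<Rightarrow> real set \<Rightarrow> (nat \<Rightarrow> real \<Rightarrow> real) \<Rightarrow>
    ((nat \<Rightarrow> real \<Rightarrow> real) \<Rightarrow> bool) \<Rightarrow> bool" where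
  "nonresonant m K c bc \<longleftrightarrow> (\<forall>u. solves m K c bc (\<lambda>_. 0) u \<longrightarrow> (\<forall>t\<in>K. u t = 0))"

definition green :: "nat \<Rightarrow> real set \<Rightarrow> (nat \<Rightarrow> real \<Rightarrow> real) \<Rightarrow>
    ((nat \<Rightarrow> real \<Rightarrow> real) \<Rightarrow> bool) \<Rightarrow> (real \<Rightarrow> real \<Rightarrow> real) \<Rightarrow> bool" where
  "green m K c bc G \<longleftrightarrow> nonresonant m K c bc \<and>
     (\<forall>\<sigma>. \<sigma> absolutely_integrable_on K \<longrightarrow>
        (\<forall>t\<in>K. (\<lambda>s. G t s * \<sigma> s) integrable_on K) \<and>
        solves m K c bc \<sigma> (\<lambda>t. integral K (\<lambda>s. G t s * \<sigma> s)))"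

definition bc_D :: "nat \<Rightarrow> real \<Rightarrow> (nat \<Rightarrow> real \<Rightarrow> real) \<Rightarrow> bool" where
  "bc_D n S Du \<longleftrightarrow> (\<forall>k<n. Du (2*k) 0 = 0 \<and> Du (2*k) S = 0)"

definition bc_M2 :: "nat \<Rightarrow> real \<Rightarrow> (nat \<Rightarrow> real \<Rightarrow> real) \<Rightarrow> bool" where
  "bc_M2 n S Du \<longleftrightarrow> (\<forall>k<n. Du (2*k) 0 = 0 \<and> Du (2*k+1) S = 0)"

text \<open>Coefficients of the reflected operator tilde L on [0,2T]: even coefficients are
  reflected evenly, odd ones oddly.\<close>
definition refl_coef :: "real \<Rightarrow> (nat \<Rightarrow> real \<Rightarrow> real) \<Rightarrow> nat \<Rightarrow> real \<Rightarrow> real" where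
  "refl_coef T a k t =
     (if t \<le> T then a k t
      else if even k then a k (2*T - t) else - a k (2*T - t))"

end

theory Submission
  imports Defs
begin

text \<open>Extend \<open>u\<^sub>M\<^sub>2\<close> evenly and \<open>u\<^sub>D\<close> oddly across \<open>T\<close>. The boundary conditions at \<open>T\<close>
  (odd derivatives vanish for \<open>u\<^sub>M\<^sub>2\<close>, even ones for \<open>u\<^sub>D\<close>) are exactly what makes every
  reflected derivative continuous at \<open>T\<close>, and reflecting the coefficients as in \<open>L\<close>-tilde makes
  the equation invariant. So both extensions solve the Dirichlet problem for \<open>L\<close>-tilde on \<open>[0, 2T]\<close>,
  with the evenly resp. oddly reflected right-hand sides, and for every \<open>p\<close> the Green's function
  represents \<open>u\<^sub>M\<^sub>2 + p u\<^sub>D\<close> on \<open>[0, T]\<close>. Beyond \<open>T\<close> the reflected data equal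
  \<open>\<sigma>\<^sub>1 - p \<sigma>\<^sub>2\<close> at the mirror point, so a sign for \<open>G\<^sub>D[2T]\<close> and for both \<open>\<sigma>\<^sub>1 \<plusminus> p \<sigma>\<^sub>2\<close>
  gives a sign for \<open>u\<^sub>M\<^sub>2 + p u\<^sub>D\<close>; the three claims are the cases \<open>p = \<plusminus>1\<close> and \<open>p \<in> {0, -1}\<close>.\<close>

definition short_interval_family ::
    "real set \<Rightarrow> nat \<Rightarrow> (nat \<Rightarrow> real) \<Rightarrow> (nat \<Rightarrow> real) \<Rightarrow> real \<Rightarrow> bool" where
  "short_interval_family K N a b \<delta> \<longleftrightarrow>
     (\<forall>i<N. a i \<le> b i \<and> {a i..b i} \<subseteq> K) \<and>
     (\<forall>i<N. \<forall>j<N. i \<noteq> j \<longrightarrow> b i \<le> a j \<or> b j \<le> a i) \<and>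
     (\<Sum>i<N. b i - a i) < \<delta>"

lemma abs_cont_on_iff:
  "abs_cont_on K f \<longleftrightarrow>
     (\<forall>\<epsilon>>0. \<exists>\<delta>>0. \<forall>N a b. short_interval_family K N a b \<delta> \<longrightarrow>
        (\<Sum>i<N. \<bar>f (b i) - f (a i)\<bar>) < \<epsilon>)"
  unfolding abs_cont_on_def short_interval_family_def by simp

lemma abs_cont_on_cong:
  assumes "abs_cont_on K f" and "\<And>t. t \<in> K \<Longrightarrow> g t = f t"
  shows "abs_cont_on K g"
  unfolding abs_cont_on_iff
proof (intro allI impI)
  fix \<epsilon> :: real assume "\<epsilon> > 0"
  then obtain \<delta> where "\<delta> > 0"
    and f: "\<And>N a b. short_interval_family K N a b \<delta> \<Longrightarrow> (\<Sum>i<N. \<bar>f (b i) - f (a i)\<bar>) < \<epsilon>"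
    using assms(1) unfolding abs_cont_on_iff by blast
  have "(\<Sum>i<N. \<bar>g (b i) - g (a i)\<bar>) < \<epsilon>" if P: "short_interval_family K N a b \<delta>" for N a b
  proof -
    have "a i \<in> K \<and> b i \<in> K" if "i < N" for i
    proof -
      have "a i \<le> b i" "{a i..b i} \<subseteq> K" using P that unfolding short_interval_family_def by auto
      then show ?thesis by auto
    qed
    then have "(\<Sum>i<N. \<bar>g (b i) - g (a i)\<bar>) = (\<Sum>i<N. \<bar>f (b i) - f (a i)\<bar>)"
      using assms(2) by (intro sum.cong) auto
    with f[OF P] show ?thesis by simp
  qed
  with \<open>\<delta> > 0\<close> show "\<exists>\<delta>>0. \<forall>N a b. short_interval_family K N a b \<delta> \<longrightarrow>
      (\<Sum>i<N. \<bar>g (b i) - g (a i)\<bar>) < \<epsilon>" by blast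
qed

lemma abs_cont_on_add_scaled:
  assumes "abs_cont_on K f" and "abs_cont_on K g"
  shows "abs_cont_on K (\<lambda>t. f t + p * g t)"
  unfolding abs_cont_on_iff
proof (intro allI impI)
  fix \<epsilon> :: real assume \<epsilon>: "\<epsilon> > 0"
  define \<eta> where "\<eta> = \<epsilon> / (2 * (\<bar>p\<bar> + 1))"
  have "\<eta> > 0" using \<epsilon> by (simp add: \<eta>_def add_pos_nonneg)
  have "\<epsilon>/2 > 0" using \<epsilon> by simp
  then obtain \<delta>1 where "\<delta>1 > 0"
    and f: "\<And>N a b. short_interval_family K N a b \<delta>1 \<Longrightarrow> (\<Sum>i<N. \<bar>f (b i) - f (a i)\<bar>) < \<epsilon>/2"
    using assms(1) unfolding abs_cont_on_iff by blast
  obtain \<delta>2 where "\<delta>2 > 0"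
    and g: "\<And>N a b. short_interval_family K N a b \<delta>2 \<Longrightarrow> (\<Sum>i<N. \<bar>g (b i) - g (a i)\<bar>) < \<eta>"
    using assms(2) \<open>\<eta> > 0\<close> unfolding abs_cont_on_iff by blast
  have "(\<Sum>i<N. \<bar>(f (b i) + p * g (b i)) - (f (a i) + p * g (a i))\<bar>) < \<epsilon>"
    if P: "short_interval_family K N a b (min \<delta>1 \<delta>2)" for N a b
  proof -
    have sf: "(\<Sum>i<N. \<bar>f (b i) - f (a i)\<bar>) < \<epsilon>/2" and sg: "(\<Sum>i<N. \<bar>g (b i) - g (a i)\<bar>) < \<eta>"
      using f g P unfolding short_interval_family_def by auto
    have "\<bar>p\<bar> * \<eta> \<le> \<epsilon>/2"
      using \<epsilon> by (simp add: \<eta>_def field_simps)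
    have "(\<Sum>i<N. \<bar>(f (b i) + p * g (b i)) - (f (a i) + p * g (a i))\<bar>)
        \<le> (\<Sum>i<N. \<bar>f (b i) - f (a i)\<bar> + \<bar>p\<bar> * \<bar>g (b i) - g (a i)\<bar>)"
      by (intro sum_mono) (metis abs_mult abs_triangle_ineq add_diff_add right_diff_distrib)
    also have "\<dots> = (\<Sum>i<N. \<bar>f (b i) - f (a i)\<bar>) + \<bar>p\<bar> * (\<Sum>i<N. \<bar>g (b i) - g (a i)\<bar>)"
      by (simp add: sum.distrib sum_distrib_left)
    also have "\<dots> \<le> (\<Sum>i<N. \<bar>f (b i) - f (a i)\<bar>) + \<bar>p\<bar> * \<eta>"
      using sg by (intro add_left_mono mult_left_mono) auto
    finally show ?thesis using sf \<open>\<bar>p\<bar> * \<eta> \<le> \<epsilon>/2\<close> by linarith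
  qed
  with \<open>\<delta>1 > 0\<close> \<open>\<delta>2 > 0\<close> show "\<exists>\<delta>>0. \<forall>N a b. short_interval_family K N a b \<delta> \<longrightarrow>
      (\<Sum>i<N. \<bar>(f (b i) + p * g (b i)) - (f (a i) + p * g (a i))\<bar>) < \<epsilon>"
    by (intro exI[of _ "min \<delta>1 \<delta>2"]) simp
qed

lemma abs_cont_on_const: "abs_cont_on K (\<lambda>_. c)"
  unfolding abs_cont_on_iff by (auto intro: exI[of _ 1])

lemma abs_cont_on_scaled:
  assumes "abs_cont_on K g"
  shows "abs_cont_on K (\<lambda>t. p * g t)"
  using abs_cont_on_add_scaled[OF abs_cont_on_const assms, of 0 p] by simp

lemma short_interval_family_reflect:
  assumes P: "short_interval_family {c - y..c - x} N a b \<delta>"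
  shows "short_interval_family {x..y} N (\<lambda>i. c - b i) (\<lambda>i. c - a i) \<delta>"
  unfolding short_interval_family_def
proof (intro conjI allI impI)
  fix i assume "i < N"
  then have "a i \<le> b i" "{a i..b i} \<subseteq> {c - y..c - x}"
    using P unfolding short_interval_family_def by auto
  then show "c - b i \<le> c - a i" "{c - b i..c - a i} \<subseteq> {x..y}" by auto
next
  fix i j assume "i < N" "j < N" "i \<noteq> j"
  then show "c - a i \<le> c - b j \<or> c - a j \<le> c - b i"
    using P unfolding short_interval_family_def by auto
next
  show "(\<Sum>i<N. (c - a i) - (c - b i)) < \<delta>"
    using P unfolding short_interval_family_def by simp
qed

lemma abs_cont_on_reflect:
  assumes "abs_cont_on {x..y} f"
  shows "abs_cont_on {c - y..c - x} (\<lambda>t. f (c - t))"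
  unfolding abs_cont_on_iff
proof (intro allI impI)
  fix \<epsilon> :: real assume "\<epsilon> > 0"
  then obtain \<delta> where "\<delta> > 0"
    and f: "\<And>N a b. short_interval_family {x..y} N a b \<delta> \<Longrightarrow> (\<Sum>i<N. \<bar>f (b i) - f (a i)\<bar>) < \<epsilon>"
    using assms unfolding abs_cont_on_iff by blast
  have "(\<Sum>i<N. \<bar>f (c - b i) - f (c - a i)\<bar>) < \<epsilon>"
    if "short_interval_family {c - y..c - x} N a b \<delta>" for N a b
    using f[OF short_interval_family_reflect[OF that]] by (simp add: abs_minus_commute)
  with \<open>\<delta> > 0\<close> show "\<exists>\<delta>>0. \<forall>N a b. short_interval_family {c - y..c - x} N a b \<delta> \<longrightarrow>
      (\<Sum>i<N. \<bar>f (c - b i) - f (c - a i)\<bar>) < \<epsilon>" by blast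
qed

lemma short_interval_family_clip_min:
  assumes P: "short_interval_family {x..z} N a b \<delta>" and "x \<le> y"
  shows "short_interval_family {x..y} N (\<lambda>i. min (a i) y) (\<lambda>i. min (b i) y) \<delta>"
  unfolding short_interval_family_def
proof (intro conjI allI impI)
  fix i assume "i < N"
  then have "a i \<le> b i" "{a i..b i} \<subseteq> {x..z}"
    using P unfolding short_interval_family_def by auto
  then show "min (a i) y \<le> min (b i) y" "{min (a i) y..min (b i) y} \<subseteq> {x..y}"
    using \<open>x \<le> y\<close> by auto
next
  fix i j assume "i < N" "j < N" "i \<noteq> j"
  then have "b i \<le> a j \<or> b j \<le> a i"
    using P unfolding short_interval_family_def by auto
  then show "min (b i) y \<le> min (a j) y \<or> min (b j) y \<le> min (a i) y" by auto
next
  have "(\<Sum>i<N. min (b i) y - min (a i) y) \<le> (\<Sum>i<N. b i - a i)"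
    using P unfolding short_interval_family_def by (intro sum_mono) auto
  then show "(\<Sum>i<N. min (b i) y - min (a i) y) < \<delta>"
    using P unfolding short_interval_family_def by linarith
qed

lemma short_interval_family_clip_max:
  assumes P: "short_interval_family {x..z} N a b \<delta>" and "y \<le> z"
  shows "short_interval_family {y..z} N (\<lambda>i. max (a i) y) (\<lambda>i. max (b i) y) \<delta>"
  unfolding short_interval_family_def
proof (intro conjI allI impI)
  fix i assume "i < N"
  then have "a i \<le> b i" "{a i..b i} \<subseteq> {x..z}"
    using P unfolding short_interval_family_def by auto
  then show "max (a i) y \<le> max (b i) y" "{max (a i) y..max (b i) y} \<subseteq> {y..z}"
    using \<open>y \<le> z\<close> by auto
next
  fix i j assume "i < N" "j < N" "i \<noteq> j"
  then have "b i \<le> a j \<or> b j \<le> a i"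
    using P unfolding short_interval_family_def by auto
  then show "max (b i) y \<le> max (a j) y \<or> max (b j) y \<le> max (a i) y" by auto
next
  have "(\<Sum>i<N. max (b i) y - max (a i) y) \<le> (\<Sum>i<N. b i - a i)"
    using P unfolding short_interval_family_def by (intro sum_mono) auto
  then show "(\<Sum>i<N. max (b i) y - max (a i) y) < \<delta>"
    using P unfolding short_interval_family_def by linarith
qed

lemma abs_cont_on_Un:
  assumes f1: "abs_cont_on {x..y} f" and f2: "abs_cont_on {y..z} f" and "x \<le> y" "y \<le> z"
  shows "abs_cont_on {x..z} f"
  unfolding abs_cont_on_iff
proof (intro allI impI)
  fix \<epsilon> :: real assume "\<epsilon> > 0"
  then have "\<epsilon>/2 > 0" by simp
  then obtain \<delta>1 \<delta>2 where "\<delta>1 > 0" "\<delta>2 > 0"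
    and H1: "\<And>N a b. short_interval_family {x..y} N a b \<delta>1 \<Longrightarrow> (\<Sum>i<N. \<bar>f (b i) - f (a i)\<bar>) < \<epsilon>/2"
    and H2: "\<And>N a b. short_interval_family {y..z} N a b \<delta>2 \<Longrightarrow> (\<Sum>i<N. \<bar>f (b i) - f (a i)\<bar>) < \<epsilon>/2"
    using f1 f2 unfolding abs_cont_on_iff by (elim allE[where x="\<epsilon>/2"] impE exE conjE) blast+
  have "(\<Sum>i<N. \<bar>f (b i) - f (a i)\<bar>) < \<epsilon>"
    if P: "short_interval_family {x..z} N a b (min \<delta>1 \<delta>2)" for N a b
  proof -
    have P1: "short_interval_family {x..z} N a b \<delta>1" and P2: "short_interval_family {x..z} N a b \<delta>2"
      using P unfolding short_interval_family_def by auto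
    have "(\<Sum>i<N. \<bar>f (b i) - f (a i)\<bar>) \<le>
        (\<Sum>i<N. \<bar>f (min (b i) y) - f (min (a i) y)\<bar> + \<bar>f (max (b i) y) - f (max (a i) y)\<bar>)"
    proof (intro sum_mono)
      fix i assume "i \<in> {..<N}"
      then have "a i \<le> b i" using P unfolding short_interval_family_def by auto
      then consider "b i \<le> y" | "y \<le> a i" | "a i < y \<and> y < b i" by linarith
      then show "\<bar>f (b i) - f (a i)\<bar> \<le>
          \<bar>f (min (b i) y) - f (min (a i) y)\<bar> + \<bar>f (max (b i) y) - f (max (a i) y)\<bar>"
        by cases (use \<open>a i \<le> b i\<close> in \<open>auto simp: min_def max_def\<close>)
    qed
    also have "\<dots> < \<epsilon>/2 + \<epsilon>/2"
      using H1[OF short_interval_family_clip_min[OF P1 \<open>x \<le> y\<close>]]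
        H2[OF short_interval_family_clip_max[OF P2 \<open>y \<le> z\<close>]]
      by (simp add: sum.distrib)
    finally show ?thesis by simp
  qed
  with \<open>\<delta>1 > 0\<close> \<open>\<delta>2 > 0\<close> show "\<exists>\<delta>>0. \<forall>N a b. short_interval_family {x..z} N a b \<delta> \<longrightarrow>
      (\<Sum>i<N. \<bar>f (b i) - f (a i)\<bar>) < \<epsilon>"
    by (intro exI[of _ "min \<delta>1 \<delta>2"]) simp
qed

definition reflect_ext :: "real \<Rightarrow> real \<Rightarrow> (real \<Rightarrow> real) \<Rightarrow> real \<Rightarrow> real" where
  "reflect_ext T s f t = (if t \<le> T then f t else s * f (2*T - t))"

lemma negligible_reflect:
  fixes S :: "real set"
  assumes "negligible S"
  shows "negligible ((\<lambda>t. c - t) ` S)"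
proof (rule negligible_locally_Lipschitz_image[OF _ assms])
  fix x assume "x \<in> S"
  show "\<exists>U B. open U \<and> x \<in> U \<and> (\<forall>y\<in>S \<inter> U. norm ((c - y) - (c - x)) \<le> B * norm (y - x))"
    by (rule exI[of _ UNIV], rule exI[of _ 1]) (simp add: abs_minus_commute)
qed (simp add: DIM_real)

lemma AE_lebesgue_reflect:
  fixes P :: "real \<Rightarrow> bool"
  assumes "AE t in lebesgue. P t"
  shows "AE t in lebesgue. P (c - t)"
proof -
  obtain N where N: "N \<in> null_sets lebesgue" "{x \<in> space lebesgue. \<not> P x} \<subseteq> N"
    using assms unfolding eventually_ae_filter by blast
  then have "negligible N"
    by (simp add: negligible_iff_null_sets)
  from negligible_reflect[OF this] have "(\<lambda>t. c - t) ` N \<in> null_sets lebesgue"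
    by (simp only: negligible_iff_null_sets)
  moreover have "{x \<in> space lebesgue. \<not> P (c - x)} \<subseteq> (\<lambda>t. c - t) ` N"
  proof
    fix x assume "x \<in> {x \<in> space lebesgue. \<not> P (c - x)}"
    then have "c - x \<in> N" using N(2) by auto
    then show "x \<in> (\<lambda>t. c - t) ` N" by (rule rev_image_eqI) simp
  qed
  ultimately show ?thesis
    unfolding eventually_ae_filter by blast
qed

lemma AE_lebesgue_neq: "AE t in lebesgue. t \<noteq> (c::real)"
proof -
  have "{c} \<in> null_sets lebesgue"
    using negligible_iff_null_sets by blast
  then show ?thesis
    unfolding eventually_ae_filter by (rule bexI[rotated]) auto
qed

lemma absolutely_integrable_reflect_ext:
  assumes f: "f absolutely_integrable_on {0..T}" and "T \<ge> 0"
  shows "reflect_ext T s f absolutely_integrable_on {0..2*T}"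
proof -
  have img: "(\<lambda>x. (1 / -1) *\<^sub>R x + -((1 / -1) *\<^sub>R (2*T))) ` cbox 0 T = {T..2*T}"
    by (auto simp: image_iff intro!: bexI[of _ "2*T - _"])
  have "(\<lambda>x. f (2*T - x)) integrable_on {T..2*T}"
    using integrable_affinity[of f 0 T "-1" "2*T"] f img
    by (simp add: absolutely_integrable_on_def)
  moreover have "(\<lambda>x. norm (f (2*T - x))) integrable_on {T..2*T}"
    using integrable_affinity[of "\<lambda>x. norm (f x)" 0 T "-1" "2*T"] f img
    by (simp add: absolutely_integrable_on_def)
  ultimately have "(\<lambda>x. s * f (2*T - x)) absolutely_integrable_on {T..2*T}"
    by (intro set_integrable_mult_right) (simp add: absolutely_integrable_on_def)
  then have right: "reflect_ext T s f absolutely_integrable_on {T..2*T}"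
    by (rule absolutely_integrable_spike[of _ _ "{T}"]) (auto simp: reflect_ext_def)
  have left: "reflect_ext T s f absolutely_integrable_on {0..T}"
    by (rule absolutely_integrable_spike[OF f, of "{}"]) (auto simp: reflect_ext_def)
  have "{0..T} \<union> {T..2*T} = {0..2*T}" using \<open>T \<ge> 0\<close> by auto
  then show ?thesis using absolutely_integrable_Un[OF left right] by simp
qed

lemma abs_cont_on_reflect_ext:
  assumes f: "abs_cont_on {0..T} f" and glue: "f T = s * f T" and "T \<ge> 0"
  shows "abs_cont_on {0..2*T} (reflect_ext T s f)"
proof -
  have left: "abs_cont_on {0..T} (reflect_ext T s f)"
    by (rule abs_cont_on_cong[OF f]) (simp add: reflect_ext_def)
  have "abs_cont_on {2*T - T..2*T - 0} (\<lambda>t. s * f (2*T - t))"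
    by (intro abs_cont_on_scaled abs_cont_on_reflect f)
  then have "abs_cont_on {T..2*T} (\<lambda>t. s * f (2*T - t))"
    by simp
  then have right: "abs_cont_on {T..2*T} (reflect_ext T s f)"
    by (rule abs_cont_on_cong) (use glue in \<open>auto simp: reflect_ext_def\<close>)
  show ?thesis
    by (rule abs_cont_on_Un[OF left right]) (use \<open>T \<ge> 0\<close> in auto)
qed

lemma has_real_derivative_reflect_within:
  assumes "(f has_real_derivative f' (c - t)) (at (c - t) within (\<lambda>x. c - x) ` S)"
  shows "((\<lambda>x. f (c - x)) has_real_derivative - f' (c - t)) (at t within S)"
proof -
  have "((\<lambda>x. c - x) has_real_derivative -1) (at t within S)"
    by (auto intro!: derivative_eq_intros)
  from DERIV_image_chain[OF assms this] show ?thesis by (simp add: o_def)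
qed

lemma has_real_derivative_reflect_ext_within:
  assumes T: "T > 0"
    and f: "\<And>x. x \<in> {0..T} \<Longrightarrow> (f has_real_derivative f' x) (at x within {0..T})"
    and glue: "f T = s * f T" "f' T = - s * f' T"
    and t: "t \<in> {0..2*T}"
  shows "(reflect_ext T s f has_real_derivative reflect_ext T (- s) f' t) (at t within {0..2*T})"
proof -
  have left: "(reflect_ext T s f has_real_derivative f' t) (at t within {0..T})" if "t \<in> {0..T}" for t
    by (rule has_field_derivative_transform_within[OF f[OF that], of 1])
      (use that in \<open>auto simp: reflect_ext_def\<close>)
  have right: "(reflect_ext T s f has_real_derivative - s * f' (2*T - t)) (at t within {T..2*T})"
    if "t \<in> {T..2*T}" for t
  proof -
    have "(\<lambda>x. 2*T - x) ` {T..2*T} = {0..T}"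
      by (auto simp: image_iff intro!: bexI[of _ "2*T - _"])
    with that f[of "2*T - t"]
    have "((\<lambda>x. f (2*T - x)) has_real_derivative - f' (2*T - t)) (at t within {T..2*T})"
      by (intro has_real_derivative_reflect_within) auto
    then have "((\<lambda>x. s * f (2*T - x)) has_real_derivative - s * f' (2*T - t)) (at t within {T..2*T})"
      using DERIV_cmult by fastforce
    then show ?thesis
      by (rule has_field_derivative_transform_within[of _ _ _ _ 1])
        (use that glue in \<open>auto simp: reflect_ext_def\<close>)
  qed
  consider "t < T" | "t = T" | "t > T" by linarith
  then show ?thesis
  proof cases
    case 1
    then have "at t within {0..2*T} = at t within {0..T}"
      using t by (intro at_within_nhd[of _ "{..<T}"]) auto
    then show ?thesis using left[of t] 1 t by (simp add: reflect_ext_def)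
  next
    case 3
    then have "at t within {0..2*T} = at t within {T..2*T}"
      using t by (intro at_within_nhd[of _ "{T<..}"]) auto
    then show ?thesis using right[of t] 3 t by (simp add: reflect_ext_def)
  next
    case 2
    \<comment> \<open>at \<open>T\<close> the one-sided derivatives agree by the second glue condition\<close>
    have "(reflect_ext T s f has_real_derivative f' T) (at T within {0..T} \<union> {T..2*T})"
      using left[of T] right[of T] T glue(2)
      unfolding has_field_derivative_iff Lim_within_Un by auto
    moreover have "{0..T} \<union> {T..2*T} = {0..2*T}" using T by auto
    ultimately show ?thesis using 2 by (simp add: reflect_ext_def)
  qed
qed

lemma has_real_derivative_reflect_ext_at:
  assumes "t \<noteq> T"
    and "t < T \<Longrightarrow> (f has_real_derivative f' t) (at t)"
    and "t > T \<Longrightarrow> (f has_real_derivative f' (2*T - t)) (at (2*T - t))"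
  shows "(reflect_ext T s f has_real_derivative reflect_ext T (- s) f' t) (at t)"
proof (cases "t < T")
  case True
  have "(reflect_ext T s f has_real_derivative f' t) (at t)"
    by (rule has_field_derivative_transform_within_open[OF assms(2)[OF True], of "{..<T}"])
      (use True in \<open>auto simp: reflect_ext_def\<close>)
  with True show ?thesis
    by (simp add: reflect_ext_def)
next
  case False
  with assms(1) have "t > T" by auto
  have "((\<lambda>x. f (2*T - x)) has_real_derivative - f' (2*T - t)) (at t)"
    using has_real_derivative_reflect_within[of f f' "2*T" t UNIV] assms(3)[OF \<open>t > T\<close>] by simp
  then have "((\<lambda>x. s * f (2*T - x)) has_real_derivative - s * f' (2*T - t)) (at t)"
    using DERIV_cmult by fastforce
  then have "(reflect_ext T s f has_real_derivative - s * f' (2*T - t)) (at t)"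
    by (rule has_field_derivative_transform_within_open[of _ _ _ "{T<..}"])
      (use \<open>t > T\<close> in \<open>auto simp: reflect_ext_def\<close>)
  with \<open>t > T\<close> show ?thesis
    by (simp add: reflect_ext_def)
qed

lemma W_m1_reflect_ext:
  assumes T: "T > 0" and m: "m \<ge> 1" and W: "W_m1 m {0..T} u Du"
    and glue: "\<And>k. k < m \<Longrightarrow> Du k T = s * (-1)^k * Du k T"
  shows "W_m1 m {0..2*T} (reflect_ext T s u) (\<lambda>k. reflect_ext T (s * (-1)^k) (Du k))"
proof -
  have W0: "\<forall>t\<in>{0..T}. Du 0 t = u t"
    and W1: "\<forall>k<m - 1. \<forall>t\<in>{0..T}. (Du k has_real_derivative Du (Suc k) t) (at t within {0..T})"
    and W2: "abs_cont_on {0..T} (Du (m - 1))"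
    and W3: "AE t in lebesgue. t \<in> {0..T} \<longrightarrow> (Du (m - 1) has_real_derivative Du m t) (at t)"
    using W unfolding W_m1_def by auto
  have deriv: "(reflect_ext T (s * (-1)^k) (Du k) has_real_derivative
      reflect_ext T (s * (-1)^Suc k) (Du (Suc k)) t) (at t within {0..2*T})"
    if "k < m - 1" "t \<in> {0..2*T}" for k t
    using has_real_derivative_reflect_ext_within[OF T, of "Du k" "Du (Suc k)" "s * (-1)^k" t]
      W1 glue[of k] glue[of "Suc k"] that by simp
  have abs_cont: "abs_cont_on {0..2*T} (reflect_ext T (s * (-1)^(m - 1)) (Du (m - 1)))"
    using abs_cont_on_reflect_ext[OF W2] glue[of "m - 1"] m T by simp
  have "AE t in lebesgue. t \<in> {0..2*T} \<longrightarrow> (reflect_ext T (s * (-1)^(m - 1)) (Du (m - 1))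
      has_real_derivative reflect_ext T (s * (-1)^m) (Du m) t) (at t)"
    using W3 AE_lebesgue_reflect[OF W3, of "2*T"] AE_lebesgue_neq[of T]
  proof eventually_elim
    case (elim t)
    have "- (s * (-1)^(m - 1)) = s * (-1::real)^m"
      using m by (cases m) auto
    then show ?case
      using has_real_derivative_reflect_ext_at[of t T "Du (m - 1)" "Du m" "s * (-1)^(m - 1)"] elim
      by auto
  qed
  with W0 deriv abs_cont show ?thesis
    unfolding W_m1_def by (auto simp: reflect_ext_def)
qed

lemma sum_refl_coef_reflect_ext:
  assumes "t > T"
  shows "(\<Sum>k<m. refl_coef T a k t * reflect_ext T (s * (-1)^k) (Du k) t)
       = s * (\<Sum>k<m. a k (2*T - t) * Du k (2*T - t))"
  unfolding sum_distrib_left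
  by (rule sum.cong) (use assms in \<open>auto simp: refl_coef_def reflect_ext_def\<close>)

lemma solves_reflect_ext:
  assumes T: "T > 0" and n: "n \<ge> 1" and W: "W_m1 (2*n) {0..T} u Du"
    and glue: "\<And>k. k < 2*n \<Longrightarrow> Du k T = s * (-1)^k * Du k T"
    and bc0: "\<And>k. k < n \<Longrightarrow> Du (2*k) 0 = 0"
    and eq: "AE t in lebesgue. t \<in> {0..T} \<longrightarrow> Du (2*n) t + (\<Sum>k<2*n. a k t * Du k t) = \<sigma> t"
  shows "solves (2*n) {0..2*T} (refl_coef T a) (bc_D n (2*T)) (reflect_ext T s \<sigma>) (reflect_ext T s u)"
proof -
  define E where "E k = reflect_ext T (s * (-1)^k) (Du k)" for k
  have "W_m1 (2*n) {0..2*T} (reflect_ext T s u) E"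
    unfolding E_def by (rule W_m1_reflect_ext) (use T n W glue in auto)
  moreover have "bc_D n (2*T) E"
    using bc0 T by (simp add: bc_D_def E_def reflect_ext_def)
  moreover have "AE t in lebesgue. t \<in> {0..2*T} \<longrightarrow>
      E (2*n) t + (\<Sum>k<2*n. refl_coef T a k t * E k t) = reflect_ext T s \<sigma> t"
    using eq AE_lebesgue_reflect[OF eq, of "2*T"]
  proof eventually_elim
    case (elim t)
    show ?case
    proof (intro impI)
      assume t: "t \<in> {0..2*T}"
      show "E (2*n) t + (\<Sum>k<2*n. refl_coef T a k t * E k t) = reflect_ext T s \<sigma> t"
      proof (cases "t \<le> T")
        case True
        then show ?thesis using elim t by (simp add: E_def reflect_ext_def refl_coef_def)
      next
        case False
        then have "s * (Du (2*n) (2*T - t) + (\<Sum>k<2*n. a k (2*T - t) * Du k (2*T - t)))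
            = s * \<sigma> (2*T - t)"
          using elim t by auto
        moreover have "t > T" using False by simp
        ultimately show ?thesis
          using sum_refl_coef_reflect_ext[where m="2*n" and a=a and s=s and Du=Du]
          by (simp add: E_def reflect_ext_def distrib_left)
      qed
    qed
  qed
  ultimately show ?thesis
    unfolding solves_def by blast
qed

lemma solves_M2_reflect_ext:
  assumes "T > 0" "n \<ge> 1" and "solves (2*n) {0..T} a (bc_M2 n T) \<sigma> u"
  shows "solves (2*n) {0..2*T} (refl_coef T a) (bc_D n (2*T)) (reflect_ext T 1 \<sigma>) (reflect_ext T 1 u)"
proof -
  obtain Du where W: "W_m1 (2*n) {0..T} u Du" and bc: "bc_M2 n T Du"
    and eq: "AE t in lebesgue. t \<in> {0..T} \<longrightarrow> Du (2*n) t + (\<Sum>k<2*n. a k t * Du k t) = \<sigma> t"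
    using assms(3) unfolding solves_def by blast
  have "Du k T = 1 * (-1)^k * Du k T" if "k < 2*n" for k
  proof (cases "even k")
    case False
    then obtain j where "k = 2*j + 1" by (metis oddE)
    with bc that show ?thesis by (simp add: bc_M2_def)
  qed simp
  with assms(1,2) W bc eq show ?thesis
    by (intro solves_reflect_ext) (auto simp: bc_M2_def)
qed

lemma solves_D_reflect_ext:
  assumes "T > 0" "n \<ge> 1" and "solves (2*n) {0..T} a (bc_D n T) \<sigma> u"
  shows "solves (2*n) {0..2*T} (refl_coef T a) (bc_D n (2*T)) (reflect_ext T (-1) \<sigma>) (reflect_ext T (-1) u)"
proof -
  obtain Du where W: "W_m1 (2*n) {0..T} u Du" and bc: "bc_D n T Du"
    and eq: "AE t in lebesgue. t \<in> {0..T} \<longrightarrow> Du (2*n) t + (\<Sum>k<2*n. a k t * Du k t) = \<sigma> t"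
    using assms(3) unfolding solves_def by blast
  have "Du k T = (-1) * (-1)^k * Du k T" if "k < 2*n" for k
  proof (cases "even k")
    case True
    then obtain j where "k = 2*j" by (metis evenE)
    with bc that show ?thesis by (simp add: bc_D_def)
  qed simp
  with assms(1,2) W bc eq show ?thesis
    by (intro solves_reflect_ext) (auto simp: bc_D_def)
qed

lemma W_m1_add_scaled:
  assumes U: "W_m1 m K u Du" and V: "W_m1 m K v Dv"
  shows "W_m1 m K (\<lambda>t. u t + p * v t) (\<lambda>k t. Du k t + p * Dv k t)"
proof -
  have "AE t in lebesgue. t \<in> K \<longrightarrow> (Du (m - 1) has_real_derivative Du m t) (at t)"
    and "AE t in lebesgue. t \<in> K \<longrightarrow> (Dv (m - 1) has_real_derivative Dv m t) (at t)"
    using U V unfolding W_m1_def by auto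
  then have "AE t in lebesgue. t \<in> K \<longrightarrow>
      ((\<lambda>t. Du (m - 1) t + p * Dv (m - 1) t) has_real_derivative Du m t + p * Dv m t) (at t)"
    by eventually_elim (auto intro!: DERIV_add DERIV_cmult)
  with U V show ?thesis
    unfolding W_m1_def by (auto intro!: DERIV_add DERIV_cmult abs_cont_on_add_scaled)
qed

lemma solves_bc_D_add_scaled:
  assumes "solves m K c (bc_D n S) \<sigma> u" and "solves m K c (bc_D n S) \<tau> v"
  shows "solves m K c (bc_D n S) (\<lambda>t. \<sigma> t + p * \<tau> t) (\<lambda>t. u t + p * v t)"
proof -
  obtain Du where U: "W_m1 m K u Du" "bc_D n S Du"
    and eqU: "AE t in lebesgue. t \<in> K \<longrightarrow> Du m t + (\<Sum>k<m. c k t * Du k t) = \<sigma> t"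
    using assms(1) unfolding solves_def by blast
  obtain Dv where V: "W_m1 m K v Dv" "bc_D n S Dv"
    and eqV: "AE t in lebesgue. t \<in> K \<longrightarrow> Dv m t + (\<Sum>k<m. c k t * Dv k t) = \<tau> t"
    using assms(2) unfolding solves_def by blast
  have "AE t in lebesgue. t \<in> K \<longrightarrow> (Du m t + p * Dv m t) +
      (\<Sum>k<m. c k t * (Du k t + p * Dv k t)) = \<sigma> t + p * \<tau> t"
    using eqU eqV
  proof eventually_elim
    case (elim t)
    have sum_eq: "(\<Sum>k<m. c k t * (Du k t + p * Dv k t))
        = (\<Sum>k<m. c k t * Du k t) + p * (\<Sum>k<m. c k t * Dv k t)"
      by (simp add: algebra_simps sum.distrib sum_distrib_left)
    show ?case
    proof
      assume "t \<in> K"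
      with elim have "\<sigma> t = Du m t + (\<Sum>k<m. c k t * Du k t)"
        and "\<tau> t = Dv m t + (\<Sum>k<m. c k t * Dv k t)" by auto
      then show "(Du m t + p * Dv m t) + (\<Sum>k<m. c k t * (Du k t + p * Dv k t)) = \<sigma> t + p * \<tau> t"
        unfolding sum_eq by (simp add: algebra_simps)
    qed
  qed
  moreover have "bc_D n S (\<lambda>k t. Du k t + p * Dv k t)"
    using U(2) V(2) by (simp add: bc_D_def)
  ultimately show ?thesis
    unfolding solves_def using W_m1_add_scaled[OF U(1) V(1)] by blast
qed

lemma green_bc_D_eq_integral:
  assumes G: "green m K c (bc_D n S) G" and \<sigma>: "\<sigma> absolutely_integrable_on K"
    and u: "solves m K c (bc_D n S) \<sigma> u" and t: "t \<in> K"
  shows "u t = integral K (\<lambda>s. G t s * \<sigma> s)"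
proof -
  have "solves m K c (bc_D n S) \<sigma> (\<lambda>t. integral K (\<lambda>s. G t s * \<sigma> s))"
    using G \<sigma> unfolding green_def by blast
  from solves_bc_D_add_scaled[OF u this, of "-1"]
  have "solves m K c (bc_D n S) (\<lambda>_. 0) (\<lambda>t. u t - integral K (\<lambda>s. G t s * \<sigma> s))"
    by simp
  then show ?thesis
    using G t unfolding green_def nonresonant_def by auto
qed

lemma integral_nonneg_AE_lebesgue:
  fixes f :: "real \<Rightarrow> real"
  assumes f: "f integrable_on K" and ae: "AE s in lebesgue. s \<in> K \<longrightarrow> 0 \<le> f s"
  shows "0 \<le> integral K f"
proof -
  obtain N where N: "N \<in> null_sets lebesgue" "{s \<in> space lebesgue. \<not> (s \<in> K \<longrightarrow> 0 \<le> f s)} \<subseteq> N"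
    using ae unfolding eventually_ae_filter by blast
  then have "negligible N"
    by (simp add: negligible_iff_null_sets)
  moreover have "f s = max 0 (f s)" if "s \<in> K - N" for s
    using N(2) that by auto
  ultimately have "integral K f = integral K (\<lambda>s. max 0 (f s))"
    and "(\<lambda>s. max 0 (f s)) integrable_on K"
    using integral_spike[of N K "\<lambda>s. max 0 (f s)" f] integrable_spike[OF f, of N] by auto
  then show ?thesis
    by (simp add: integral_nonneg)
qed

lemma AE_sign_reflect_ext_combination:
  assumes "AE t in lebesgue. t \<in> {0..T} \<longrightarrow> 0 \<le> d * (f t + p * g t) \<and> 0 \<le> d * (f t - p * g t)"
  shows "AE s in lebesgue. s \<in> {0..2*T} \<longrightarrow> 0 \<le> d * (reflect_ext T 1 f s + p * reflect_ext T (-1) g s)"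
  using assms AE_lebesgue_reflect[OF assms, of "2*T"]
proof eventually_elim
  case (elim s)
  show ?case
  proof
    assume s: "s \<in> {0..2*T}"
    show "0 \<le> d * (reflect_ext T 1 f s + p * reflect_ext T (-1) g s)"
    proof (cases "s \<le> T")
      case True
      with elim s show ?thesis by (simp add: reflect_ext_def)
    next
      case False
      \<comment> \<open>beyond \<open>T\<close> the combination is \<open>f - p g\<close> at the mirror point\<close>
      with s have "2*T - s \<in> {0..T}" by auto
      with elim have "0 \<le> d * (f (2*T - s) - p * g (2*T - s))" by blast
      with False show ?thesis by (simp add: reflect_ext_def)
    qed
  qed
qed

context
  fixes n :: nat and T :: real and a :: "nat \<Rightarrow> real \<Rightarrow> real" and \<sigma>1 \<sigma>2 uM2 uD :: "real \<Rightarrow> real"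
  assumes n: "n \<ge> 1" and T: "T > 0"
    and \<sigma>1: "\<sigma>1 absolutely_integrable_on {0..T}"
    and \<sigma>2: "\<sigma>2 absolutely_integrable_on {0..T}"
    and uM2: "solves (2*n) {0..T} a (bc_M2 n T) \<sigma>1 uM2"
    and uD: "solves (2*n) {0..T} a (bc_D n T) \<sigma>2 uD"
begin

lemma green_sign_combination:
  assumes G: "green (2*n) {0..2*T} (refl_coef T a) (bc_D n (2*T)) G"
    and G_sign: "\<forall>t\<in>{0..2*T}. \<forall>s\<in>{0..2*T}. 0 \<le> c * G t s"
    and \<sigma>_sign: "AE t in lebesgue. t \<in> {0..T} \<longrightarrow>
       0 \<le> d * (\<sigma>1 t + p * \<sigma>2 t) \<and> 0 \<le> d * (\<sigma>1 t - p * \<sigma>2 t)"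
    and t: "t \<in> {0..T}"
  shows "0 \<le> c * d * (uM2 t + p * uD t)"
proof -
  define \<sigma> where "\<sigma> s = reflect_ext T 1 \<sigma>1 s + p * reflect_ext T (-1) \<sigma>2 s" for s
  have sol: "solves (2*n) {0..2*T} (refl_coef T a) (bc_D n (2*T)) \<sigma>
      (\<lambda>s. reflect_ext T 1 uM2 s + p * reflect_ext T (-1) uD s)"
    unfolding \<sigma>_def
    by (rule solves_bc_D_add_scaled[OF solves_M2_reflect_ext[OF T n uM2] solves_D_reflect_ext[OF T n uD]])
  have \<sigma>_int: "\<sigma> absolutely_integrable_on {0..2*T}"
    unfolding \<sigma>_def using T
    by (intro set_integral_add(1) set_integrable_mult_right absolutely_integrable_reflect_ext \<sigma>1 \<sigma>2) auto
  have tJ: "t \<in> {0..2*T}" using t T by auto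
  from green_bc_D_eq_integral[OF G \<sigma>_int sol tJ] t
  have "c * d * (uM2 t + p * uD t) = integral {0..2*T} (\<lambda>s. c * d * (G t s * \<sigma> s))"
    by (simp add: reflect_ext_def)
  also have "0 \<le> \<dots>"
  proof (rule integral_nonneg_AE_lebesgue)
    have "(\<lambda>s. G t s * \<sigma> s) integrable_on {0..2*T}"
      using G \<sigma>_int tJ unfolding green_def by blast
    then show "(\<lambda>s. c * d * (G t s * \<sigma> s)) integrable_on {0..2*T}"
      by (rule integrable_on_mult_right)
    have "AE s in lebesgue. s \<in> {0..2*T} \<longrightarrow> 0 \<le> d * \<sigma> s"
      unfolding \<sigma>_def by (rule AE_sign_reflect_ext_combination[OF \<sigma>_sign])
    then show "AE s in lebesgue. s \<in> {0..2*T} \<longrightarrow> 0 \<le> c * d * (G t s * \<sigma> s)"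
    proof eventually_elim
      case (elim s)
      show ?case
      proof
        assume s: "s \<in> {0..2*T}"
        have "0 \<le> (c * G t s) * (d * \<sigma> s)"
          by (rule mult_nonneg_nonneg) (use elim G_sign tJ s in auto)
        then show "0 \<le> c * d * (G t s * \<sigma> s)" by (simp add: mult_ac)
      qed
    qed
  qed
  finally show ?thesis .
qed

lemma abs_uD_le_uM2:
  assumes "green (2*n) {0..2*T} (refl_coef T a) (bc_D n (2*T)) G"
    and "\<forall>t\<in>{0..2*T}. \<forall>s\<in>{0..2*T}. G t s \<ge> 0"
    and \<sigma>: "AE t in lebesgue. t \<in> {0..T} \<longrightarrow> \<bar>\<sigma>2 t\<bar> \<le> \<sigma>1 t"
    and t: "t \<in> {0..T}"
  shows "\<bar>uD t\<bar> \<le> uM2 t"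
proof -
  have "0 \<le> 1 * 1 * (uM2 t + p * uD t)" if "p = 1 \<or> p = -1" for p
  proof (rule green_sign_combination[OF assms(1) _ _ t])
    show "\<forall>t\<in>{0..2*T}. \<forall>s\<in>{0..2*T}. 0 \<le> 1 * G t s"
      using assms(2) by simp
    show "AE t in lebesgue. t \<in> {0..T} \<longrightarrow>
        0 \<le> 1 * (\<sigma>1 t + p * \<sigma>2 t) \<and> 0 \<le> 1 * (\<sigma>1 t - p * \<sigma>2 t)"
      using \<sigma> by eventually_elim (use that in auto)
  qed
  from this[of 1] this[of "-1"] show ?thesis by simp
qed

lemma uM2_nonpos_le_uD:
  assumes "green (2*n) {0..2*T} (refl_coef T a) (bc_D n (2*T)) G"
    and "\<forall>t\<in>{0..2*T}. \<forall>s\<in>{0..2*T}. G t s \<le> 0"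
    and \<sigma>: "AE t in lebesgue. t \<in> {0..T} \<longrightarrow> 0 \<le> \<sigma>2 t \<and> \<sigma>2 t \<le> \<sigma>1 t"
    and t: "t \<in> {0..T}"
  shows "uM2 t \<le> 0 \<and> uM2 t \<le> uD t"
proof -
  have "0 \<le> -1 * 1 * (uM2 t + p * uD t)" if "p = 0 \<or> p = -1" for p
  proof (rule green_sign_combination[OF assms(1) _ _ t])
    show "\<forall>t\<in>{0..2*T}. \<forall>s\<in>{0..2*T}. 0 \<le> -1 * G t s"
      using assms(2) by simp
    show "AE t in lebesgue. t \<in> {0..T} \<longrightarrow>
        0 \<le> 1 * (\<sigma>1 t + p * \<sigma>2 t) \<and> 0 \<le> 1 * (\<sigma>1 t - p * \<sigma>2 t)"
      using \<sigma> by eventually_elim (use that in auto)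
  qed
  from this[of 0] this[of "-1"] show ?thesis by simp
qed

lemma uM2_nonneg_ge_uD:
  assumes "green (2*n) {0..2*T} (refl_coef T a) (bc_D n (2*T)) G"
    and "\<forall>t\<in>{0..2*T}. \<forall>s\<in>{0..2*T}. G t s \<le> 0"
    and \<sigma>: "AE t in lebesgue. t \<in> {0..T} \<longrightarrow> \<sigma>1 t \<le> \<sigma>2 t \<and> \<sigma>2 t \<le> 0"
    and t: "t \<in> {0..T}"
  shows "uM2 t \<ge> 0 \<and> uD t \<le> uM2 t"
proof -
  have "0 \<le> -1 * -1 * (uM2 t + p * uD t)" if "p = 0 \<or> p = -1" for p
  proof (rule green_sign_combination[OF assms(1) _ _ t])
    show "\<forall>t\<in>{0..2*T}. \<forall>s\<in>{0..2*T}. 0 \<le> -1 * G t s"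
      using assms(2) by simp
    show "AE t in lebesgue. t \<in> {0..T} \<longrightarrow>
        0 \<le> -1 * (\<sigma>1 t + p * \<sigma>2 t) \<and> 0 \<le> -1 * (\<sigma>1 t - p * \<sigma>2 t)"
      using \<sigma> by eventually_elim (use that in auto)
  qed
  from this[of 0] this[of "-1"] show ?thesis by simp
qed

end

theorem theorem6p5:
  fixes n :: nat and T \<alpha> :: real and a :: "nat \<Rightarrow> real \<Rightarrow> real"
    and \<sigma>1 \<sigma>2 uM2 uD :: "real \<Rightarrow> real"
  assumes n: "n \<ge> 1" and T: "T > 0" and \<alpha>: "\<alpha> \<ge> 1"
    and a: "\<forall>k<2*n. in_Lp \<alpha> {0..T} (a k)"
    and GD2T: "\<exists>G. green (2*n) {0..2*T} (refl_coef T a) (bc_D n (2*T)) G"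
    and GDT: "\<exists>G. green (2*n) {0..T} a (bc_D n T) G"
    and GM2T: "\<exists>G. green (2*n) {0..T} a (bc_M2 n T) G"
    and \<sigma>1: "\<sigma>1 absolutely_integrable_on {0..T}"
    and \<sigma>2: "\<sigma>2 absolutely_integrable_on {0..T}"
    and uM2: "solves (2*n) {0..T} a (bc_M2 n T) \<sigma>1 uM2"
    and uD: "solves (2*n) {0..T} a (bc_D n T) \<sigma>2 uD"
  shows
    "((\<exists>G. green (2*n) {0..2*T} (refl_coef T a) (bc_D n (2*T)) G \<and>
           (\<forall>t\<in>{0..2*T}. \<forall>s\<in>{0..2*T}. G t s \<ge> 0)) \<and>
       (AE t in lebesgue. t \<in> {0..T} \<longrightarrow> \<bar>\<sigma>2 t\<bar> \<le> \<sigma>1 t)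
       \<longrightarrow> (\<forall>t\<in>{0..T}. \<bar>uD t\<bar> \<le> uM2 t))
     \<and>
     ((\<exists>G. green (2*n) {0..2*T} (refl_coef T a) (bc_D n (2*T)) G \<and>
           (\<forall>t\<in>{0..2*T}. \<forall>s\<in>{0..2*T}. G t s \<le> 0)) \<and>
       (AE t in lebesgue. t \<in> {0..T} \<longrightarrow> 0 \<le> \<sigma>2 t \<and> \<sigma>2 t \<le> \<sigma>1 t)
       \<longrightarrow> (\<forall>t\<in>{0..T}. uM2 t \<le> 0 \<and> uM2 t \<le> uD t))
     \<and>
     ((\<exists>G. green (2*n) {0..2*T} (refl_coef T a) (bc_D n (2*T)) G \<and>
           (\<forall>t\<in>{0..2*T}. \<forall>s\<in>{0..2*T}. G t s \<le> 0)) \<and>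
       (AE t in lebesgue. t \<in> {0..T} \<longrightarrow> \<sigma>1 t \<le> \<sigma>2 t \<and> \<sigma>2 t \<le> 0)
       \<longrightarrow> (\<forall>t\<in>{0..T}. uM2 t \<ge> 0 \<and> uD t \<le> uM2 t))"
  using abs_uD_le_uM2[OF n T \<sigma>1 \<sigma>2 uM2 uD] uM2_nonpos_le_uD[OF n T \<sigma>1 \<sigma>2 uM2 uD]
    uM2_nonneg_ge_uD[OF n T \<sigma>1 \<sigma>2 uM2 uD]
  by blast

end
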